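(* Let $\pi=(\pi_1,\dots,\pi_n)$ and $\lambda=(\lambda_1,\dots,\lambda_n)$ be partitions with at most $n$ parts such that $\lambda\not\subseteq\pi$ (i.e. $\lambda_i>\pi_i$ for some $i$). Then $W_\lambda(q^\pi t^{\delta(n)};q,p,t,a,b)=0$.
   Context: Fix $|p|<1$; parameters generic. $E(x)=(x;p)_\infty(p/x;p)_\infty$. For integer $m\ge0$, $(a)_m=\prod_{k=0}^{m-1}E(aq^k)$, for $m<0$, $(a)_m=1/(aq^m)_{-m}$; for a partition $\lambda$ with $n$ parts $(a)_\lambda=\prod_{i=1}^n(at^{1-i})_{\lambda_i}$; several arguments denote products; integer subscripts denote the single-integer symbol. $q^\pi t^{\delta(n)}=(q^{\pi_1}t^{n-1},q^{\pi_2}t^{n-2},\dots,q^{\pi_n})$. For $n$-part partitions with $\lambda_1\ge\mu_1\ge\dots\ge\lambda_n\ge\mu_n$, $\lambda_{n+1}=\mu_{n+1}=0$, $H_{\lambda/\mu}(q,p,t,b)=\prod_{1\le i<j\le n}\Big\{\frac{(q^{\mu_i-\mu_{j-1}}t^{j-i})_{\mu_{j-1}-\lambda_j}(q^{\lambda_i+\lambda_j}t^{3-j-i}b)_{\mu_{j-1}-\lambda_j}}{(q^{\mu_i-\mu_{j-1}+1}t^{j-i-1})_{\mu_{j-1}-\lambda_j}(q^{\lambda_i+\lambda_j+1}t^{2-j-i}b)_{\mu_{j-1}-\lambda_j}}\frac{(q^{\lambda_i-\mu_{j-1}+1}t^{j-i-1})_{\mu_{j-1}-\lambda_j}}{(q^{\lambda_i-\mu_{j-1}}t^{j-i})_{\mu_{j-1}-\lambda_j}}\Big\}\prod_{1\le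 i<j-1\le n}\frac{(q^{\mu_i+\lambda_j+1}t^{1-j-i}b)_{\mu_{j-1}-\lambda_j}}{(q^{\mu_i+\lambda_j}t^{2-j-i}b)_{\mu_{j-1}-\lambda_j}}$; for $x\in\mathbb{C}$, $W_{\lambda/\mu}(x;q,p,t,a,b)=H_{\lambda/\mu}\frac{(x^{-1},ax)_\lambda(qbx/t,qb/(axt))_\mu}{(x^{-1},ax)_\mu(qbx,qb/(ax))_\lambda}\prod_{i=1}^n\frac{E(bt^{1-2i}q^{2\mu_i})}{E(bt^{1-2i})}\frac{(bt^{1-2i})_{\mu_i+\lambda_{i+1}}}{(bqt^{-2i})_{\mu_i+\lambda_{i+1}}}t^{i(\mu_i-\lambda_{i+1})}$ (zero if the interlacing fails); recursively $W_{\lambda/\mu}(y,z_1,\dots,z_\ell;q,p,t,a,b)=\sum_\nu W_{\lambda/\nu}(yt^{-\ell};q,p,t,at^{2\ell},bt^\ell)W_{\nu/\mu}(z_1,\dots,z_\ell;q,p,t,a,b)$ over $\nu$ with $\lambda_1\ge\nu_1\ge\dots\ge\lambda_n\ge\nu_n\ge0$; $W_\lambda=W_{\lambda/0}$ where $0=(0,\dots,0)$. *)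

theory Defs
  imports "HOL-Analysis.Analysis"
begin

definition Eth :: "complex \<Rightarrow> complex \<Rightarrow> complex" where
  "Eth p x = prodinf (\<lambda>k. 1 - x * p ^ k) * prodinf (\<lambda>k. 1 - (p / x) * p ^ k)"

definition efac :: "complex \<Rightarrow> complex \<Rightarrow> complex \<Rightarrow> int \<Rightarrow> complex" where
  "efac p q a m =
     (if 0 \<le> m then (\<Prod>k<nat m. Eth p (a * q ^ k))
      else 1 / (\<Prod>k<nat (- m). Eth p (a * q powi (m + int k))))"

text \<open>Partitions with n parts are lists of length n; 1-based access, 0 beyond.\<close>
definition part :: "nat list \<Rightarrow> nat \<Rightarrow> nat" where
  "part l i = (if 1 \<le> i \<and> i \<le> length l then l ! (i - 1) else 0)"

definition is_partition :: "nat list \<Rightarrow> bool" where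
  "is_partition l \<longleftrightarrow> sorted_wrt (\<ge>) l"

definition efac_part :: "complex \<Rightarrow> complex \<Rightarrow> complex \<Rightarrow> complex \<Rightarrow> nat list \<Rightarrow> complex" where
  "efac_part p q t a lam =
     (\<Prod>i=1..length lam. efac p q (a * t powi (1 - int i)) (int (part lam i)))"

text \<open>The quotient (a)_lambda / (a)_mu for mu contained in lambda, written in cancelled form
  prod_i prod_(mu_i <= k < lambda_i) E(a t^(1-i) q^k).\<close>
definition efac_ratio :: "complex \<Rightarrow> complex \<Rightarrow> complex \<Rightarrow> complex \<Rightarrow> nat list \<Rightarrow> nat list \<Rightarrow> complex" where
  "efac_ratio p q t a lam mu =
     (\<Prod>i=1..length lam. \<Prod>k\<in>{part mu i..<part lam i}. Eth p (a * t powi (1 - int i) * q ^ k))"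

definition interlace :: "nat list \<Rightarrow> nat list \<Rightarrow> bool" where
  "interlace lam mu \<longleftrightarrow> length mu = length lam \<and>
     (\<forall>i\<in>{1..length lam}. part lam (Suc i) \<le> part mu i \<and> part mu i \<le> part lam i)"

definition Hfac :: "complex \<Rightarrow> complex \<Rightarrow> complex \<Rightarrow> complex \<Rightarrow> nat list \<Rightarrow> nat list \<Rightarrow> complex" where
  "Hfac p q t b lam mu =
    (let n = length lam; L = (\<lambda>i. int (part lam i)); M = (\<lambda>i. int (part mu i));
         ef = efac p q in
     (\<Prod>(i,j)\<in>{(i,j). 1 \<le> i \<and> i < j \<and> j \<le> n}.
        let m = M (j - 1) - L j; ii = int i; jj = int j in
        (ef (q powi (M i - M (j - 1)) * t powi (jj - ii)) m
          * ef (q powi (L i + L j) * t powi (3 - jj - ii) * b) m)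
        / (ef (q powi (M i - M (j - 1) + 1) * t powi (jj - ii - 1)) m
          * ef (q powi (L i + L j + 1) * t powi (2 - jj - ii) * b) m)
        * (ef (q powi (L i - M (j - 1) + 1) * t powi (jj - ii - 1)) m
          / ef (q powi (L i - M (j - 1)) * t powi (jj - ii)) m))
     * (\<Prod>(i,j)\<in>{(i,j). 1 \<le> i \<and> i < j - 1 \<and> j - 1 \<le> n}.
        let m = M (j - 1) - L j; ii = int i; jj = int j in
        ef (q powi (M i + L j + 1) * t powi (1 - jj - ii) * b) m
        / ef (q powi (M i + L j) * t powi (2 - jj - ii) * b) m))"

definition W1 :: "complex \<Rightarrow> complex \<Rightarrow> complex \<Rightarrow> complex \<Rightarrow> complex \<Rightarrow> nat list \<Rightarrow> nat list
                   \<Rightarrow> complex \<Rightarrow> complex" where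
  "W1 p q t a b lam mu x =
    (if interlace lam mu then
       Hfac p q t b lam mu
       * efac_ratio p q t (1 / x) lam mu * efac_ratio p q t (a * x) lam mu
       * (efac_part p q t (q * b * x / t) mu * efac_part p q t (q * b / (a * x * t)) mu)
       / (efac_part p q t (q * b * x) lam * efac_part p q t (q * b / (a * x)) lam)
       * (\<Prod>i=1..length lam.
            let ii = int i; s = int (part mu i + part lam (Suc i)) in
            Eth p (b * t powi (1 - 2 * ii) * q powi (2 * int (part mu i)))
              / Eth p (b * t powi (1 - 2 * ii))
            * efac p q (b * t powi (1 - 2 * ii)) s / efac p q (b * q * t powi (- 2 * ii)) s
            * t powi (ii * (int (part mu i) - int (part lam (Suc i)))))
     else 0)"

fun Wm :: "complex \<Rightarrow> complex \<Rightarrow> complex \<Rightarrow> complex \<Rightarrow> complex \<Rightarrow> nat list \<Rightarrow> nat list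
              \<Rightarrow> complex list \<Rightarrow> complex" where
  "Wm p q t a b lam mu [] = (if lam = mu then 1 else 0)"
| "Wm p q t a b lam mu (y # zs) =
     (\<Sum>\<nu>\<in>{\<nu>. interlace lam \<nu>}.
        W1 p q t (a * t ^ (2 * length zs)) (b * t ^ length zs) lam \<nu> (y * t powi (- int (length zs)))
        * Wm p q t a b \<nu> mu zs)"

end

theory Submission
  imports Defs
begin

text \<open>Expand W_lambda by the branching rule in its first variable q^pi_1 t^(n-1); after the
  rescaling y t^-(n-1) prescribed by the recursion, the one-variable factor W_(lambda/nu) is
  evaluated at x = q^pi_1. If nu_1 <= pi_1 < lambda_1, the factor (x^-1)_lambda / (x^-1)_nu of
  that term contains E(1) = 0. Otherwise interlacing passes the violation pi_j < lambda_j on to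
  nu and the remaining variables q^pi_2 t^(n-2), ..., so the other factor vanishes by induction.\<close>

lemma Eth_1_eq_0:
  assumes "norm p < 1"
  shows "Eth p 1 = 0"
proof -
  let ?f = "\<lambda>k::nat. 1 - 1 * p ^ k"
  have "summable (\<lambda>k. norm (?f k - 1))"
    using assms by (simp add: norm_power summable_geometric)
  then have "convergent_prod ?f"
    by (intro abs_convergent_prod_imp_convergent_prod summable_imp_abs_convergent_prod)
  then have "?f has_prod prodinf ?f"
    by (simp add: convergent_prod_has_prod_iff)
  then have "prodinf ?f = 0"
    by (rule has_prod_zeroI[where n = 0]) simp
  then show ?thesis
    unfolding Eth_def by simp
qed

definition spec_point :: "complex \<Rightarrow> complex \<Rightarrow> nat list \<Rightarrow> complex list" where
  "spec_point q t c = map (\<lambda>j. q ^ (c ! j) * t ^ (length c - 1 - j)) [0..<length c]"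

lemma length_spec_point [simp]: "length (spec_point q t c) = length c"
  by (simp add: spec_point_def)

lemma spec_point_Cons: "spec_point q t (c0 # c) = (q ^ c0 * t ^ length c) # spec_point q t c"
proof -
  have "[0..<length (c0 # c)] = 0 # map Suc [0..<length c]"
    by (simp add: upt_conv_Cons map_Suc_upt del: upt_Suc)
  then show ?thesis
    unfolding spec_point_def by simp
qed

definition exceeds :: "nat list \<Rightarrow> nat list \<Rightarrow> bool" where
  "exceeds lam c \<longleftrightarrow> (\<exists>j<length c. c ! j < part lam (Suc j))"

lemma efac_ratio_eq_0:
  assumes "i \<in> {1..length lam}" and "part mu i \<le> k" and "k < part lam i"
    and "Eth p (a * t powi (1 - int i) * q ^ k) = 0"
  shows "efac_ratio p q t a lam mu = 0"
proof -
  have "(\<Prod>k\<in>{part mu i..<part lam i}. Eth p (a * t powi (1 - int i) * q ^ k)) = 0"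
    using assms(2-4) by (intro prod_zero) auto
  then show ?thesis
    unfolding efac_ratio_def using assms(1) by (intro prod_zero) auto
qed

lemma W1_at_q_power_eq_0:
  assumes "norm p < 1" and "q \<noteq> 0" and "part \<nu> 1 \<le> c" and "c < part lam 1"
  shows "W1 p q t a b lam \<nu> (q ^ c) = 0"
proof -
  have "1 \<le> length lam"
    using assms(4) by (auto simp: part_def split: if_splits)
  moreover have "Eth p (1 / q ^ c * t powi (1 - int 1) * q ^ c) = 0"
    using assms(1,2) by (simp add: Eth_1_eq_0)
  ultimately have "efac_ratio p q t (1 / q ^ c) lam \<nu> = 0"
    using assms(3,4) by (intro efac_ratio_eq_0[of 1 _ _ c]) auto
  then show ?thesis
    unfolding W1_def by simp
qed

lemma interlace_exceeds:
  assumes "interlace lam \<nu>" and "is_partition (c0 # c)" and "exceeds lam (c0 # c)"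
    and "\<not> (part \<nu> 1 \<le> c0 \<and> c0 < part lam 1)"
  shows "exceeds \<nu> c \<or> (c = [] \<and> 0 < part \<nu> 1)"
proof -
  obtain j where j: "j < length (c0 # c)" "(c0 # c) ! j < part lam (Suc j)"
    using assms(3) by (auto simp: exceeds_def)
  show ?thesis
  proof (cases j)
    case 0
    then have "c0 < part \<nu> 1"
      using j assms(4) by simp
    moreover have "c ! 0 \<le> c0" if "c \<noteq> []"
      using assms(2) that by (cases c) (auto simp: is_partition_def)
    ultimately show ?thesis
      by (cases "c = []") (auto simp: exceeds_def)
  next
    case (Suc j')
    with j have j': "j' < length c" "c ! j' < part lam (Suc (Suc j'))"
      by auto
    then have "Suc j' \<le> length lam"
      by (auto simp: part_def split: if_splits)
    then have "part lam (Suc (Suc j')) \<le> part \<nu> (Suc j')"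
      using assms(1) by (auto simp: interlace_def)
    with j' show ?thesis
      by (auto simp: exceeds_def)
  qed
qed

lemma Wm_spec_point_eq_0:
  assumes "norm p < 1" and "q \<noteq> 0" and "t \<noteq> 0" and "part mu 1 = 0"
    and "is_partition c" and "exceeds lam c"
  shows "Wm p q t a b lam mu (spec_point q t c) = 0"
  using assms(5,6)
proof (induction c arbitrary: lam a b)
  case Nil
  then show ?case
    by (simp add: exceeds_def)
next
  case (Cons c0 c)
  have x: "q ^ c0 * t ^ length c * t powi - int (length c) = q ^ c0"
    using assms(3) by (simp add: power_int_minus)
  have "W1 p q t a' b' lam \<nu> (q ^ c0) * Wm p q t a b \<nu> mu (spec_point q t c) = 0"
    if "interlace lam \<nu>" for a' b' \<nu>
  proof (cases "part \<nu> 1 \<le> c0 \<and> c0 < part lam 1")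
    case True
    then show ?thesis
      using W1_at_q_power_eq_0 assms(1,2) by simp
  next
    case False
    have "is_partition c"
      using Cons.prems(1) by (simp add: is_partition_def)
    then have "Wm p q t a b \<nu> mu (spec_point q t c) = 0"
      using interlace_exceeds[OF that Cons.prems False] Cons.IH assms(4)
      by (auto simp: spec_point_def)
    then show ?thesis
      by simp
  qed
  then show ?case
    unfolding spec_point_Cons Wm.simps length_spec_point x by (intro sum.neutral) auto
qed

theorem mainTheorem5:
  fixes p q t a b :: complex and n :: nat and pi lam :: "nat list"
  assumes "norm p < 1"
    and "q \<noteq> 0" and "t \<noteq> 0" and "a \<noteq> 0" and "b \<noteq> 0"
    and generic: "\<forall>i j k l m :: int.
       q powi i * t powi j * a powi k * b powi l = p powi m \<longrightarrow> i = 0 \<and> j = 0 \<and> k = 0 \<and> l = 0"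
    and "length pi = n" and "length lam = n"
    and "is_partition pi" and "is_partition lam"
    and "\<exists>i<n. pi ! i < lam ! i"
  shows "Wm p q t a b lam (replicate n 0) (map (\<lambda>i. q ^ (pi ! i) * t ^ (n - 1 - i)) [0..<n]) = 0"
proof -
  have "exceeds lam pi"
    using assms(7,8,11) by (auto simp: exceeds_def part_def)
  moreover have "part (replicate n 0) 1 = 0"
    by (simp add: part_def)
  ultimately have "Wm p q t a b lam (replicate n 0) (spec_point q t pi) = 0"
    using Wm_spec_point_eq_0 assms(1,2,3,9) by blast
  then show ?thesis
    using assms(7) by (simp add: spec_point_def)
qed

end
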